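(* Let $I_1,\dots,I_n$ be i.i.d. Bernoulli random variables with $\Pr[I_i=1]=p=1-q$, $0<q<1$, let $I_{n+1}=\prod_{j=1}^n(1-I_j)$, and let $P_i=I_i/\sum_{j=1}^{n+1}I_j$ for $i=1,\dots,n+1$. Let $\pi_1,\dots,\pi_{n+1}\ge0$ with $\pi_i>0$ for some $i\le n$, and let $W_i=\big(\sum_{j=1}^{n+1}\pi_j\big)P_i$ for $i=1,\dots,n+1$ (homogeneous tontine with active administrator). Then $E[W_i]=\pi_i$ for all $i=1,\dots,n+1$ if and only if $$\pi_i=\frac1n\sum_{j=1}^n\pi_j\ \ (i=1,\dots,n)\qquad\text{and}\qquad \pi_{n+1}=\frac{q^n}{1-q^n}\sum_{j=1}^n\pi_j,$$ i.e. all participants invest the same amount $\pi$ and $\pi_{n+1}=\frac{nq^n}{1-q^n}\pi$. *)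

theory Defs
  imports "HOL-Probability.Probability"
begin

text \<open>Joint law of i.i.d. Bernoulli(p) indicators I_1..I_n, with outcome
  \<omega> i = True meaning I_i = 1 (participant i survives).\<close>
definition bern_iid :: "nat \<Rightarrow> real \<Rightarrow> (nat \<Rightarrow> bool) pmf" where
  "bern_iid n p = Pi_pmf {1..n} False (\<lambda>_. bernoulli_pmf p)"

definition tontine_I :: "nat \<Rightarrow> (nat \<Rightarrow> bool) \<Rightarrow> nat \<Rightarrow> real" where
  "tontine_I n \<omega> i =
     (if i = n + 1 then (\<Prod>j\<in>{1..n}. 1 - of_bool (\<omega> j)) else of_bool (\<omega> i))"

definition tontine_P :: "nat \<Rightarrow> (nat \<Rightarrow> bool) \<Rightarrow> nat \<Rightarrow> real" where
  "tontine_P n \<omega> i = tontine_I n \<omega> i / (\<Sum>j\<in>{1..n+1}. tontine_I n \<omega> j)"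

definition tontine_W :: "nat \<Rightarrow> (nat \<Rightarrow> real) \<Rightarrow> (nat \<Rightarrow> bool) \<Rightarrow> nat \<Rightarrow> real" where
  "tontine_W n \<pi> \<omega> i = (\<Sum>j\<in>{1..n+1}. \<pi> j) * tontine_P n \<omega> i"

end

theory Submission
  imports Defs
begin

text \<open>The shares P_1, ..., P_{n+1} sum to 1 in every outcome, since the administrator's indicator
  fires exactly when nobody survives. Hence E[P_{n+1}] = q^n is the probability that everyone dies,
  and exchangeability of the participants forces E[P_i] = (1 - q^n)/n for i \<le> n. As
  E[W_i] = (\<Sum>j \<pi>_j) E[P_i], fairness is a linear condition on \<pi> that is solved directly.\<close>

lemma finite_set_pmf_bern_iid: "finite (set_pmf (bern_iid n p))"
proof (rule finite_subset)
  show "set_pmf (bern_iid n p) \<subseteq> PiE_dflt {1..n} False (\<lambda>_. UNIV)"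
    unfolding bern_iid_def using set_Pi_pmf_subset[of "{1..n}" False] by (auto simp: PiE_dflt_def)
  show "finite (PiE_dflt {1..n} False (\<lambda>_. UNIV :: bool set))" by auto
qed

lemma prod_one_minus_of_bool:
  "finite A \<Longrightarrow> (\<Prod>j\<in>A. 1 - of_bool (\<omega> j) :: real) = of_bool (\<forall>j\<in>A. \<not> \<omega> j)"
  by (induction A rule: finite_induct) auto

lemma sum_tontine_I:
  "(\<Sum>j\<in>{1..n+1}. tontine_I n \<omega> j) =
     (\<Sum>j\<in>{1..n}. of_bool (\<omega> j)) + of_bool (\<forall>j\<in>{1..n}. \<not> \<omega> j)"
proof -
  have "(\<Sum>j\<in>{1..n}. tontine_I n \<omega> j) = (\<Sum>j\<in>{1..n}. of_bool (\<omega> j))"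
    by (rule sum.cong) (auto simp: tontine_I_def)
  then show ?thesis by (simp add: tontine_I_def prod_one_minus_of_bool)
qed

lemma sum_tontine_I_ge_1: "(\<Sum>j\<in>{1..n+1}. tontine_I n \<omega> j) \<ge> 1"
proof (cases "\<forall>j\<in>{1..n}. \<not> \<omega> j")
  case True
  then show ?thesis unfolding sum_tontine_I by (simp add: sum_nonneg)
next
  case False
  then obtain k where k: "k \<in> {1..n}" "\<omega> k" by auto
  have "1 \<le> (\<Sum>j\<in>{1..n}. of_bool (\<omega> j) :: real)"
    using member_le_sum[of k "{1..n}" "\<lambda>j. of_bool (\<omega> j) :: real"] k by simp
  then show ?thesis unfolding sum_tontine_I by (simp add: add_increasing2)
qed

lemma sum_tontine_P: "(\<Sum>i\<in>{1..n+1}. tontine_P n \<omega> i) = 1"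
  using sum_tontine_I_ge_1[of n \<omega>] by (simp add: tontine_P_def flip: sum_divide_distrib)

lemma tontine_P_last: "tontine_P n \<omega> (n+1) = (\<Prod>j\<in>{1..n}. 1 - of_bool (\<omega> j))"
  by (auto simp: tontine_P_def tontine_I_def sum_tontine_I prod_one_minus_of_bool)

lemma expectation_tontine_P_last:
  assumes "0 \<le> p" "p \<le> 1"
  shows "measure_pmf.expectation (bern_iid n p) (\<lambda>\<omega>. tontine_P n \<omega> (n+1)) = (1 - p) ^ n"
proof -
  have "measure_pmf.expectation (bern_iid n p) (\<lambda>\<omega>. tontine_P n \<omega> (n+1)) =
        (\<Prod>j\<in>{1..n}. measure_pmf.expectation (bernoulli_pmf p) (\<lambda>b. 1 - of_bool b))"
    unfolding tontine_P_last bern_iid_def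
    by (rule expectation_prod_Pi_pmf) (auto intro: integrable_measure_pmf_finite)
  also have "\<dots> = (1 - p) ^ n" using assms by simp
  finally show ?thesis .
qed

lemma sum_tontine_I_permute:
  assumes "bij_betw h {1..n} {1..n}"
  shows "(\<Sum>j\<in>{1..n+1}. tontine_I n (\<omega> \<circ> h) j) = (\<Sum>j\<in>{1..n+1}. tontine_I n \<omega> j)"
proof -
  have "(\<Sum>j\<in>{1..n}. of_bool ((\<omega> \<circ> h) j) :: real) = (\<Sum>j\<in>{1..n}. of_bool (\<omega> j))"
    using sum.reindex_bij_betw[OF assms, of "\<lambda>j. of_bool (\<omega> j) :: real"] by simp
  moreover have "(\<forall>j\<in>{1..n}. \<not> (\<omega> \<circ> h) j) \<longleftrightarrow> (\<forall>j\<in>h ` {1..n}. \<not> \<omega> j)"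
    by simp
  then have "(\<forall>j\<in>{1..n}. \<not> (\<omega> \<circ> h) j) \<longleftrightarrow> (\<forall>j\<in>{1..n}. \<not> \<omega> j)"
    by (simp only: bij_betw_imp_surj_on[OF assms])
  ultimately show ?thesis by (simp only: sum_tontine_I)
qed

lemma expectation_tontine_P_eq_first:
  assumes i: "i \<in> {1..n}"
  shows "measure_pmf.expectation (bern_iid n p) (\<lambda>\<omega>. tontine_P n \<omega> i) =
         measure_pmf.expectation (bern_iid n p) (\<lambda>\<omega>. tontine_P n \<omega> 1)"
proof -
  define h where "h = Transposition.transpose i (1::nat)"
  have bij: "bij_betw h {1..n} {1..n}"
    unfolding h_def using i by (intro bij_betw_transpose_iff) auto
  have outside: "h x \<notin> {1..n}" if "x \<notin> {1..n}" for x
    using i that by (auto simp: h_def transpose_def)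
  have law: "map_pmf (\<lambda>\<omega>. \<omega> \<circ> h) (bern_iid n p) = bern_iid n p"
    unfolding bern_iid_def by (rule Pi_pmf_bij_betw[OF _ bij outside, symmetric]) simp
  have "tontine_I n (\<omega> \<circ> h) 1 = tontine_I n \<omega> i" for \<omega>
    using i by (auto simp: tontine_I_def h_def)
  then have "tontine_P n (\<omega> \<circ> h) 1 = tontine_P n \<omega> i" for \<omega>
    unfolding tontine_P_def sum_tontine_I_permute[OF bij] by simp
  then have "measure_pmf.expectation (map_pmf (\<lambda>\<omega>. \<omega> \<circ> h) (bern_iid n p)) (\<lambda>\<omega>. tontine_P n \<omega> 1) =
             measure_pmf.expectation (bern_iid n p) (\<lambda>\<omega>. tontine_P n \<omega> i)"
    by simp
  then show ?thesis by (simp only: law)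
qed

lemma expectation_tontine_P:
  assumes "0 \<le> p" "p \<le> 1" "i \<in> {1..n}"
  shows "measure_pmf.expectation (bern_iid n p) (\<lambda>\<omega>. tontine_P n \<omega> i) = (1 - (1 - p) ^ n) / n"
proof -
  let ?E = "\<lambda>i. measure_pmf.expectation (bern_iid n p) (\<lambda>\<omega>. tontine_P n \<omega> i)"
  have "1 = measure_pmf.expectation (bern_iid n p) (\<lambda>\<omega>. \<Sum>i\<in>{1..n+1}. tontine_P n \<omega> i)"
    by (simp only: sum_tontine_P) simp
  also have "\<dots> = (\<Sum>i\<in>{1..n+1}. ?E i)"
    by (intro Bochner_Integration.integral_sum integrable_measure_pmf_finite finite_set_pmf_bern_iid)
  also have "\<dots> = (\<Sum>i\<in>{1..n}. ?E i) + ?E (n+1)"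
    by simp
  also have "(\<Sum>i\<in>{1..n}. ?E i) = (\<Sum>i\<in>{1..n}. ?E 1)"
    by (rule sum.cong[OF refl expectation_tontine_P_eq_first])
  also have "\<dots> = n * ?E 1"
    by simp
  also have "?E (n+1) = (1 - p) ^ n"
    by (rule expectation_tontine_P_last[OF assms(1,2)])
  finally show ?thesis
    using expectation_tontine_P_eq_first[OF assms(3)] assms(3) by (simp add: field_simps)
qed

lemma expectation_tontine_W:
  "measure_pmf.expectation M (\<lambda>\<omega>. tontine_W n \<pi> \<omega> i) =
   (\<Sum>j\<in>{1..n+1}. \<pi> j) * measure_pmf.expectation M (\<lambda>\<omega>. tontine_P n \<omega> i)"
  unfolding tontine_W_def by (rule integral_mult_right_zero)

lemma fair_contributions_iff:
  fixes n :: nat and \<pi> :: "nat \<Rightarrow> real"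
  assumes "Q < 1"
  defines "S \<equiv> \<Sum>j\<in>{1..n+1}. \<pi> j" and "T \<equiv> \<Sum>j\<in>{1..n}. \<pi> j"
  shows "S * Q = \<pi> (n+1) \<and> (\<forall>i\<in>{1..n}. S * ((1 - Q) / n) = \<pi> i) \<longleftrightarrow>
         (\<forall>i\<in>{1..n}. \<pi> i = T / n) \<and> \<pi> (n+1) = Q / (1 - Q) * T"
proof -
  have S: "S = T + \<pi> (n+1)" by (simp add: S_def T_def)
  have last_iff: "S * Q = \<pi> (n+1) \<longleftrightarrow> \<pi> (n+1) = Q / (1 - Q) * T"
    using S assms(1) by (auto simp: field_simps)
  have "S * (1 - Q) = T" if "S * Q = \<pi> (n+1)"
    using S that by (simp add: algebra_simps)
  then show ?thesis
    using last_iff by auto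
qed

theorem mainTheorem12:
  fixes n :: nat and p q :: real and \<pi> :: "nat \<Rightarrow> real"
  assumes q_pos: "0 < q" and q_lt1: "q < 1" and p_def: "p = 1 - q"
    and pi_nonneg: "\<forall>i\<in>{1..n+1}. \<pi> i \<ge> 0"
    and pi_pos: "\<exists>i\<in>{1..n}. \<pi> i > 0"
  shows "(\<forall>i\<in>{1..n+1}.
            measure_pmf.expectation (bern_iid n p) (\<lambda>\<omega>. tontine_W n \<pi> \<omega> i) = \<pi> i)
         \<longleftrightarrow>
         ((\<forall>i\<in>{1..n}. \<pi> i = (\<Sum>j\<in>{1..n}. \<pi> j) / real n) \<and>
          \<pi> (n + 1) = q ^ n / (1 - q ^ n) * (\<Sum>j\<in>{1..n}. \<pi> j))"
proof -
  have "q ^ n < 1" using q_pos q_lt1 pi_pos by (auto simp: power_less_one_iff)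
  have p: "0 \<le> p" "p \<le> 1" "1 - p = q" using p_def q_pos q_lt1 by auto
  have "measure_pmf.expectation (bern_iid n p) (\<lambda>\<omega>. tontine_P n \<omega> (n+1)) = q ^ n"
    using expectation_tontine_P_last[of p n] p by simp
  moreover have "\<forall>i\<in>{1..n}.
      measure_pmf.expectation (bern_iid n p) (\<lambda>\<omega>. tontine_P n \<omega> i) = (1 - q ^ n) / n"
    using expectation_tontine_P[of p] p by simp
  moreover have "{1..n+1} = insert (n+1) {1..n}" by auto
  ultimately show ?thesis
    using fair_contributions_iff[OF \<open>q ^ n < 1\<close>, where n = n and \<pi> = \<pi>]
    by (simp only: ball_simps(7) expectation_tontine_W) simp
qed

end
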